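(* Let $X,Y$ be Banach spaces, $T:X\to Y$ a bounded linear operator, $1\le p\le 2$ and $c>0$. Then $T$ is uniformly $p$-smooth with constant $c$ if and only if $T$ has strong martingale type $p$ with constant $c$.
   Context: Dyadic setting: for $k=0,1,2,\dots$, $\mathcal F_k$ is the $\sigma$-algebra on $[0,1)$ generated by the dyadic intervals $[i/2^k,(i+1)/2^k)$, $i=0,\dots,2^k-1$ (so $\mathcal F_0$ is trivial), with Lebesgue measure. A sequence $d_1,\dots,d_n$ of $X$-valued functions on $[0,1)$ is a sequence of differences of a dyadic martingale if each $d_k$ is $\mathcal F_k$-measurable and $\mathbb E(d_k\mid\mathcal F_{k-1})=0$. For $f:[0,1)\to X$, $\|f|L_p\|=(\int_0^1\|f(t)\|^p\,dt)^{1/p}$. $T$ is uniformly $p$-smooth with constant $c$ if for all $x\in X$, $y\in Y$: $\left(\frac{\|y+Tx\|^p+\|y-Tx\|^p}{2}-\|y\|^p\right)^{1/p}\le c\|x\|$. $T$ has strong martingale type $p$ with constant $c$ if for all $n\in\mathbb N$, all $y\in Y$ and all sequences $d_1,\dots,d_n$ of $X$-valued differences of dyadic martingales: $\left\|y+\sum_{k=1}^nTd_k\Big|L_p\right\|\le\left(\|y\|^p+c^p\sum_{k=1}^n\|d_k|L_p\|^p\right)^{1/p}$. *)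

theory Defs
  imports "HOL-Analysis.Analysis"
begin

definition dyadic_filtration :: "nat \<Rightarrow> real measure" where
  "dyadic_filtration k =
     sigma {0..<1} {{real i / 2^k ..< real (i+1) / 2^k} | i. i < 2^k}"

text \<open>d_1,...,d_n is a sequence of differences of a dyadic martingale: d_k is
  F_k-measurable and E(d_k | F_(k-1)) = 0, i.e. the integral of d_k over every
  set of F_(k-1) vanishes. (The integral is the Henstock-Kurzweil integral,
  which is available for arbitrary Banach-space-valued functions and agrees with
  the Lebesgue/Bochner integral for these step functions.)\<close>
definition dyadic_mart_diffs :: "nat \<Rightarrow> (nat \<Rightarrow> real \<Rightarrow> 'a::banach) \<Rightarrow> bool" where
  "dyadic_mart_diffs n d \<longleftrightarrow>
     (\<forall>k\<in>{1..n}. d k \<in> borel_measurable (dyadic_filtration k) \<and>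
        (\<forall>A\<in>sets (dyadic_filtration (k - 1)). (d k has_integral 0) A))"

definition Lp_norm :: "real \<Rightarrow> (real \<Rightarrow> 'a::real_normed_vector) \<Rightarrow> real" where
  "Lp_norm p f = (integral {0..<1} (\<lambda>t. norm (f t) powr p)) powr (1 / p)"

definition unif_p_smooth ::
    "('a::real_normed_vector \<Rightarrow> 'b::real_normed_vector) \<Rightarrow> real \<Rightarrow> real \<Rightarrow> bool" where
  "unif_p_smooth T p c \<longleftrightarrow>
     (\<forall>x y. ((norm (y + T x) powr p + norm (y - T x) powr p) / 2 - norm y powr p) powr (1 / p)
             \<le> c * norm x)"

definition strong_mart_type ::
    "('a::banach \<Rightarrow> 'b::real_normed_vector) \<Rightarrow> real \<Rightarrow> real \<Rightarrow> bool" where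
  "strong_mart_type T p c \<longleftrightarrow>
     (\<forall>n::nat. \<forall>y::'b. \<forall>d. dyadic_mart_diffs n d \<longrightarrow>
        Lp_norm p (\<lambda>t. y + (\<Sum>k=1..n. T (d k t)))
          \<le> (norm y powr p + c powr p * (\<Sum>k=1..n. Lp_norm p (d k) powr p)) powr (1 / p))"

end

theory Submission
  imports Defs
begin

text \<open>
  An F_k-measurable function is constant on the dyadic intervals of length 2^-k, and
  E(d_k | F_(k-1)) = 0 forces d_k to take opposite values a and -a on the two halves of each
  interval of level k - 1, on which the partial sum S = y + T d_1 + ... + T d_(k-1) is a
  constant z. Averaged over such an interval, ||S + T d_k||^p is therefore exactly the
  two-point average (||z + T a||^p + ||z - T a||^p) / 2 bounded by uniform smoothness;
  integrating that inequality and inducting on n gives strong martingale type.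
  Conversely, strong martingale type for the single difference d_1 = x r_1, with r_1 the
  first Rademacher function, is the smoothness inequality at x.
\<close>

lemma has_integral_const_atLeastLessThan:
  fixes v :: "'a::banach" and a b :: real
  assumes "a \<le> b" "\<And>t. t \<in> {a..<b} \<Longrightarrow> h t = v"
  shows "(h has_integral ((b - a) *\<^sub>R v)) {a..<b}"
proof -
  have "((\<lambda>t. v) has_integral ((b - a) *\<^sub>R v)) {a..b}"
    using has_integral_const_real[of v a b] assms(1) by simp
  moreover have "negligible {x \<in> {a..b} - {a..<b}. v \<noteq> 0}"
    by (rule negligible_subset[of "{b}"]) auto
  moreover have "negligible {x \<in> {a..<b} - {a..b}. v \<noteq> 0}"
    by (rule negligible_subset[of "{}"]) auto
  ultimately have "((\<lambda>t. v) has_integral ((b - a) *\<^sub>R v)) {a..<b}"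
    using has_integral_spike_set_eq[of "{a..b}" "{a..<b}" "\<lambda>t. v"] by simp
  then show ?thesis
    using has_integral_eq[of "{a..<b}" "\<lambda>t. v" h] assms(2) by auto
qed

section \<open>Dyadic intervals and step functions\<close>

definition dyadic_interval :: "nat \<Rightarrow> nat \<Rightarrow> real set" where
  "dyadic_interval k i = {real i / 2^k ..< real (Suc i) / 2^k}"

definition dyadic_step :: "nat \<Rightarrow> (real \<Rightarrow> 'b) \<Rightarrow> bool" where
  "dyadic_step k f \<longleftrightarrow> (\<forall>i<2^k. \<forall>t\<in>dyadic_interval k i. f t = f (real i / 2^k))"

lemma left_endpoint_in_dyadic_interval: "real i / 2^k \<in> dyadic_interval k i"
  unfolding dyadic_interval_def by (simp add: divide_strict_right_mono)

lemma dyadic_interval_subset: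
  assumes "i < 2^k" shows "dyadic_interval k i \<subseteq> {0..<1}"
proof -
  have "real (Suc i) \<le> 2^k"
    using assms by (metis Suc_leI of_nat_le_iff of_nat_numeral of_nat_power)
  then show ?thesis unfolding dyadic_interval_def by auto
qed

lemma dyadic_interval_disjoint:
  assumes "i \<noteq> j" shows "dyadic_interval k i \<inter> dyadic_interval k j = {}"
proof (rule ccontr)
  assume "dyadic_interval k i \<inter> dyadic_interval k j \<noteq> {}"
  then have "real i / 2^k < real (Suc j) / 2^k" "real j / 2^k < real (Suc i) / 2^k"
    unfolding dyadic_interval_def by auto
  then have "real i < real (Suc j)" "real j < real (Suc i)"
    by (simp_all add: divide_less_cancel)
  then show False using assms by linarith
qed

lemma dyadic_interval_Suc_union:
  "dyadic_interval (Suc k) (2*j) \<union> dyadic_interval (Suc k) (2*j + 1) = dyadic_interval k j"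
proof -
  have "real (2*j) / 2^Suc k = real j / 2^k" "real (Suc (2*j + 1)) / 2^Suc k = real (Suc j) / 2^k"
    by (simp_all add: field_simps)
  moreover have "real (2*j) / 2^Suc k \<le> real (Suc (2*j)) / 2^Suc k"
    "real (Suc (2*j)) / 2^Suc k \<le> real (Suc (2*j + 1)) / 2^Suc k"
    by (intro divide_right_mono; simp)+
  ultimately show ?thesis
    unfolding dyadic_interval_def by (metis Suc_eq_plus1 ivl_disj_un_two(3))
qed

lemma dyadic_interval_Suc_subset: "dyadic_interval (Suc k) i \<subseteq> dyadic_interval k (i div 2)"
proof -
  have "i = 2 * (i div 2) \<or> i = 2 * (i div 2) + 1" by presburger
  then show ?thesis using dyadic_interval_Suc_union[of k "i div 2"] by auto
qed

lemma sets_dyadic_filtration: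
  "sets (dyadic_filtration k) = sigma_sets {0..<1} (dyadic_interval k ` {..<2^k})"
  and space_dyadic_filtration: "space (dyadic_filtration k) = {0..<1}"
proof -
  have gen: "{{real i / 2^k ..< real (i+1) / 2^k} | i. i < 2^k} = dyadic_interval k ` {..<2^k}"
    unfolding dyadic_interval_def by auto
  have "dyadic_interval k ` {..<2^k} \<subseteq> Pow {0..<1}"
    using dyadic_interval_subset by auto
  then show "sets (dyadic_filtration k) = sigma_sets {0..<1} (dyadic_interval k ` {..<2^k})"
    and "space (dyadic_filtration k) = {0..<1}"
    unfolding dyadic_filtration_def gen by (simp_all add: sets_measure_of space_measure_of)
qed

lemma dyadic_interval_in_sets: "i < 2^k \<Longrightarrow> dyadic_interval k i \<in> sets (dyadic_filtration k)"
  unfolding sets_dyadic_filtration by auto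

lemma dyadic_interval_atom:
  assumes "S \<in> sets (dyadic_filtration k)" "i < 2^k"
  shows "dyadic_interval k i \<subseteq> S \<or> dyadic_interval k i \<inter> S = {}"
  using assms(1) unfolding sets_dyadic_filtration
proof (induction rule: sigma_sets.induct)
  case (Basic a)
  then obtain j where "a = dyadic_interval k j" by auto
  then show ?case using dyadic_interval_disjoint[of i j k] by (cases "i = j") auto
next
  case (Compl a)
  then show ?case using dyadic_interval_subset[OF assms(2)] by blast
qed auto

lemma measurable_imp_dyadic_step:
  fixes f :: "real \<Rightarrow> 'a::t1_space"
  assumes "f \<in> borel_measurable (dyadic_filtration k)"
  shows "dyadic_step k f"
  unfolding dyadic_step_def
proof (intro allI impI ballI)
  fix i t assume i: "i < 2^k" and t: "t \<in> dyadic_interval k i"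
  let ?S = "f -` {f (real i / 2^k)} \<inter> space (dyadic_filtration k)"
  have "?S \<in> sets (dyadic_filtration k)"
    using measurable_sets[OF assms] by simp
  moreover have "real i / 2^k \<in> ?S"
    using left_endpoint_in_dyadic_interval[of i k] dyadic_interval_subset[OF i]
    by (auto simp: space_dyadic_filtration)
  ultimately have "dyadic_interval k i \<subseteq> ?S"
    using dyadic_interval_atom[OF _ i] left_endpoint_in_dyadic_interval[of i k] by blast
  then show "f t = f (real i / 2^k)" using t by auto
qed

lemma dyadic_step_Suc:
  assumes "dyadic_step k f" shows "dyadic_step (Suc k) f"
  unfolding dyadic_step_def
proof (intro allI impI ballI)
  fix i t assume i: "i < 2^Suc k" and t: "t \<in> dyadic_interval (Suc k) i"
  have "i div 2 < 2^k" using i by auto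
  then have "f s = f (real (i div 2) / 2^k)" if "s \<in> dyadic_interval (Suc k) i" for s
    using assms that dyadic_interval_Suc_subset[of k i] unfolding dyadic_step_def by blast
  then show "f t = f (real i / 2^Suc k)"
    using t left_endpoint_in_dyadic_interval[of i "Suc k"] by metis
qed

lemma dyadic_step_le:
  assumes "k \<le> l" "dyadic_step k f" shows "dyadic_step l f"
  using assms by (induction l rule: dec_induct) (auto intro: dyadic_step_Suc)

lemma dyadic_step_comp: "dyadic_step k f \<Longrightarrow> dyadic_step k (\<lambda>t. F (f t))"
  unfolding dyadic_step_def by auto

lemma dyadic_step_comp2:
  "dyadic_step k f \<Longrightarrow> dyadic_step k g \<Longrightarrow> dyadic_step k (\<lambda>t. F (f t) (g t))"
  unfolding dyadic_step_def by auto

lemma dyadic_step_sum: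
  "(\<And>j. j \<in> J \<Longrightarrow> dyadic_step k (f j)) \<Longrightarrow> dyadic_step k (\<lambda>t. \<Sum>j\<in>J. f j t)"
  unfolding dyadic_step_def by (auto intro: sum.cong)

lemma dyadic_step_odd_child:
  assumes "dyadic_step k f" "j < 2^k"
  shows "f (real (2*j + 1) / 2^Suc k) = f (real (2*j) / 2^Suc k)"
proof -
  have "real (2*j + 1) / 2^Suc k \<in> dyadic_interval k j"
    using dyadic_interval_Suc_subset[of k "2*j + 1"]
      left_endpoint_in_dyadic_interval[of "2*j + 1" "Suc k"] by auto
  moreover have "real (2*j) / 2^Suc k = real j / 2^k" by simp
  ultimately show ?thesis using assms unfolding dyadic_step_def by simp
qed

section \<open>Integrals of dyadic step functions\<close>

lemma has_integral_dyadic_interval: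
  fixes f :: "real \<Rightarrow> 'a::banach"
  assumes "dyadic_step k f" "i < 2^k"
  shows "(f has_integral (1/2^k) *\<^sub>R f (real i / 2^k)) (dyadic_interval k i)"
proof -
  have "(f has_integral (real (Suc i) / 2^k - real i / 2^k) *\<^sub>R f (real i / 2^k)) (dyadic_interval k i)"
    unfolding dyadic_interval_def
  proof (rule has_integral_const_atLeastLessThan)
    show "real i / 2^k \<le> real (Suc i) / 2^k"
      by (simp add: divide_right_mono)
    show "\<And>t. t \<in> {real i / 2^k..<real (Suc i) / 2^k} \<Longrightarrow> f t = f (real i / 2^k)"
      using assms unfolding dyadic_step_def dyadic_interval_def by blast
  qed
  moreover have "real (Suc i) / 2^k - real i / 2^k = 1/2^k"
    by (simp add: field_simps)
  ultimately show ?thesis by simp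
qed

lemma UN_dyadic_interval: "(\<Union>i<2^k. dyadic_interval k i) = {0..<1}"
proof
  show "(\<Union>i<2^k. dyadic_interval k i) \<subseteq> {0..<1}"
    using dyadic_interval_subset by auto
  show "{0..<1} \<subseteq> (\<Union>i<2^k. dyadic_interval k i)"
  proof
    fix t :: real assume t: "t \<in> {0..<1}"
    define i where "i = nat \<lfloor>t * 2^k\<rfloor>"
    have "real i = of_int \<lfloor>t * 2^k\<rfloor>"
      using t unfolding i_def by simp
    then have "real i \<le> t * 2^k" "t * 2^k < real i + 1"
      by simp_all
    then have "t \<in> dyadic_interval k i"
      unfolding dyadic_interval_def by (simp add: field_simps)
    moreover have "real i < 2^k"
    proof -
      have "t * 2^k < 2^k" using t by simp
      then show ?thesis using \<open>real i \<le> t * 2^k\<close> by linarith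
    qed
    ultimately show "t \<in> (\<Union>i<2^k. dyadic_interval k i)"
      by (metis UN_iff lessThan_iff of_nat_less_numeral_power_cancel_iff)
  qed
qed

lemma has_integral_dyadic_step:
  fixes h :: "real \<Rightarrow> 'a::banach"
  assumes "dyadic_step k h"
  shows "(h has_integral (\<Sum>i<2^k. (1/2^k) *\<^sub>R h (real i / 2^k))) {0..<1}"
proof -
  have "(h has_integral (\<Sum>i<2^k. (1/2^k) *\<^sub>R h (real i / 2^k))) (\<Union>i<2^k. dyadic_interval k i)"
    by (rule has_integral_UN)
      (auto simp: pairwise_def has_integral_dyadic_interval[OF assms] dyadic_interval_disjoint)
  then show ?thesis unfolding UN_dyadic_interval .
qed

lemma has_integral_dyadic_step_halves:
  fixes f :: "real \<Rightarrow> 'a::banach"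
  assumes "dyadic_step (Suc k) f" "j < 2^k"
  shows "(f has_integral (1/2^Suc k) *\<^sub>R (f (real (2*j) / 2^Suc k) + f (real (2*j + 1) / 2^Suc k)))
           (dyadic_interval k j)"
  unfolding dyadic_interval_Suc_union[of k j, symmetric] scaleR_add_right
proof (rule has_integral_Un)
  show "(f has_integral (1/2^Suc k) *\<^sub>R f (real (2*j) / 2^Suc k)) (dyadic_interval (Suc k) (2*j))"
    using assms(2) by (intro has_integral_dyadic_interval[OF assms(1)]) simp
  show "(f has_integral (1/2^Suc k) *\<^sub>R f (real (2*j + 1) / 2^Suc k))
      (dyadic_interval (Suc k) (2*j + 1))"
    using assms(2) by (intro has_integral_dyadic_interval[OF assms(1)]) simp
  show "negligible (dyadic_interval (Suc k) (2*j) \<inter> dyadic_interval (Suc k) (2*j + 1))"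
    using dyadic_interval_disjoint[of "2*j" "2*j + 1" "Suc k"] by simp
qed

lemma sum_lessThan_double: "(\<Sum>i<2*(N::nat). g i) = (\<Sum>j<N. g (2*j) + g (2*j + 1))"
  by (induction N) (simp_all add: add.assoc)

lemma integral_dyadic_step_Suc:
  fixes h :: "real \<Rightarrow> real"
  assumes "dyadic_step (Suc k) h"
  shows "integral {0..<1} h
    = (\<Sum>j<2^k. h (real (2*j) / 2^Suc k) + h (real (2*j + 1) / 2^Suc k)) / 2^Suc k"
proof -
  have "integral {0..<1} h = (\<Sum>i<2*2^k. h (real i / 2^Suc k) / 2^Suc k)"
    using integral_unique[OF has_integral_dyadic_step[OF assms]] by simp
  also have "\<dots> = (\<Sum>j<2^k. (h (real (2*j) / 2^Suc k) + h (real (2*j + 1) / 2^Suc k)) / 2^Suc k)"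
    by (simp only: sum_lessThan_double add_divide_distrib)
  finally show ?thesis
    by (simp only: sum_divide_distrib)
qed

section \<open>Dyadic martingale differences\<close>

lemma dyadic_step_antisym:
  fixes f :: "real \<Rightarrow> 'a::banach"
  assumes "dyadic_step (Suc k) f" "\<forall>A\<in>sets (dyadic_filtration k). (f has_integral 0) A"
    and "j < 2^k"
  shows "f (real (2*j + 1) / 2^Suc k) = - f (real (2*j) / 2^Suc k)"
proof -
  have "(f has_integral 0) (dyadic_interval k j)"
    using assms(2,3) dyadic_interval_in_sets by blast
  then have "(1/2^Suc k) *\<^sub>R (f (real (2*j) / 2^Suc k) + f (real (2*j+1) / 2^Suc k)) = 0"
    using has_integral_dyadic_step_halves[OF assms(1,3)] has_integral_unique by blast
  then show ?thesis
    by (simp add: eq_neg_iff_add_eq_0 add.commute)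
qed

lemma dyadic_mart_diffs_Suc: "dyadic_mart_diffs (Suc n) d \<Longrightarrow> dyadic_mart_diffs n d"
  unfolding dyadic_mart_diffs_def by auto

lemma dyadic_mart_diffs_dyadic_step:
  assumes "dyadic_mart_diffs n d" "k \<in> {1..n}"
  shows "dyadic_step k (d k)"
  using assms measurable_imp_dyadic_step unfolding dyadic_mart_diffs_def by blast

lemma dyadic_mart_diffs_partial_sum:
  assumes "dyadic_mart_diffs n d"
  shows "dyadic_step n (\<lambda>t. y + (\<Sum>k=1..n. T (d k t)))"
proof -
  have "dyadic_step n (d k)" if "k \<in> {1..n}" for k
    using that dyadic_mart_diffs_dyadic_step[OF assms that] by (auto intro: dyadic_step_le)
  then have "dyadic_step n (\<lambda>t. \<Sum>k=1..n. T (d k t))"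
    by (intro dyadic_step_sum) (rule dyadic_step_comp)
  then show ?thesis
    by (rule dyadic_step_comp)
qed

lemma dyadic_mart_diffs_antisym:
  assumes "dyadic_mart_diffs (Suc k) d" "j < 2^k"
  shows "d (Suc k) (real (2*j + 1) / 2^Suc k) = - d (Suc k) (real (2*j) / 2^Suc k)"
  using assms dyadic_mart_diffs_dyadic_step[OF assms(1)]
  by (intro dyadic_step_antisym) (auto simp: dyadic_mart_diffs_def)

section \<open>Uniform smoothness and strong martingale type\<close>

lemma powr_midpoint_le:
  fixes a b p :: real
  assumes p: "1 \<le> p" and "0 \<le> a" "0 \<le> b"
  shows "((a + b) / 2) powr p \<le> (a powr p + b powr p) / 2"
proof (cases "a = 0 \<or> b = 0")
  case True
  have "(x / 2) powr p \<le> x powr p / 2" if "0 \<le> x" for x :: real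
  proof -
    have "2 \<le> (2::real) powr p" using powr_mono[OF p, of 2] by simp
    then have "x powr p / 2 powr p \<le> x powr p / 2" by (intro divide_left_mono) auto
    then show ?thesis by (simp add: powr_divide that)
  qed
  then show ?thesis using True assms(2,3) by auto
next
  case False
  then have "a \<in> {0<..}" "b \<in> {0<..}" using assms(2,3) by auto
  from convex_onD[OF powr_convex[OF p], of "1/2", OF _ _ this]
  show ?thesis by (simp add: add_divide_distrib)
qed

lemma norm_powr_le_midpoint:
  fixes z w :: "'a::real_normed_vector"
  assumes "1 \<le> p"
  shows "norm z powr p \<le> (norm (z + w) powr p + norm (z - w) powr p) / 2"
proof -
  have "2 * norm z = norm ((z + w) + (z - w))" by (simp add: scaleR_2[symmetric])
  also have "\<dots> \<le> norm (z + w) + norm (z - w)" by (rule norm_triangle_ineq)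
  finally have "norm z powr p \<le> ((norm (z + w) + norm (z - w)) / 2) powr p"
    using assms by (intro powr_mono2) auto
  also have "\<dots> \<le> (norm (z + w) powr p + norm (z - w) powr p) / 2"
    using assms by (intro powr_midpoint_le) auto
  finally show ?thesis .
qed

lemma powr_inverse_le_iff:
  fixes x y p :: real
  assumes "0 < p" "0 \<le> x" "0 \<le> y"
  shows "x powr (1/p) \<le> y \<longleftrightarrow> x \<le> y powr p"
proof
  assume "x powr (1/p) \<le> y"
  then have "(x powr (1/p)) powr p \<le> y powr p" using assms by (intro powr_mono2) auto
  then show "x \<le> y powr p" using assms by (simp add: powr_powr)
next
  assume "x \<le> y powr p"
  then have "x powr (1/p) \<le> (y powr p) powr (1/p)" using assms by (intro powr_mono2) auto
  then show "x powr (1/p) \<le> y" using assms by (simp add: powr_powr)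
qed

lemma unif_p_smooth_iff:
  assumes "1 \<le> p" "0 \<le> c"
  shows "unif_p_smooth T p c \<longleftrightarrow>
    (\<forall>x y. (norm (y + T x) powr p + norm (y - T x) powr p) / 2
             \<le> norm y powr p + c powr p * norm x powr p)"
proof -
  have "((norm (y + T x) powr p + norm (y - T x) powr p) / 2 - norm y powr p) powr (1/p) \<le> c * norm x
     \<longleftrightarrow> (norm (y + T x) powr p + norm (y - T x) powr p) / 2 - norm y powr p \<le> (c * norm x) powr p"
    for x y
    using norm_powr_le_midpoint[OF assms(1), of y "T x"] assms by (intro powr_inverse_le_iff) auto
  then show ?thesis
    unfolding unif_p_smooth_def using assms(2) by (simp add: powr_mult algebra_simps)
qed

(* No integrability hypothesis: a non-integrable function has integral 0. *)
lemma integral_nonneg_unconditional: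
  fixes f :: "'n::euclidean_space \<Rightarrow> real"
  assumes "\<And>x. x \<in> S \<Longrightarrow> 0 \<le> f x"
  shows "0 \<le> integral S f"
  using assms by (cases "f integrable_on S") (simp_all add: integral_nonneg not_integrable_integral)

lemma Lp_norm_powr:
  assumes "0 < p"
  shows "Lp_norm p f powr p = integral {0..<1} (\<lambda>t. norm (f t) powr p)"
proof -
  have "0 \<le> integral {0..<1} (\<lambda>t. norm (f t) powr p)"
    by (rule integral_nonneg_unconditional) simp
  then show ?thesis unfolding Lp_norm_def using assms by (simp add: powr_powr)
qed

lemma integral_norm_powr_mart_step_le:
  fixes T :: "'a::real_normed_vector \<Rightarrow> 'b::real_normed_vector"
  assumes T: "linear T"
    and smooth: "\<And>x y. (norm (y + T x) powr p + norm (y - T x) powr p) / 2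
                        \<le> norm y powr p + C * norm x powr p"
    and S: "dyadic_step k S" and e: "dyadic_step (Suc k) e"
    and antisym: "\<And>j. j < 2^k \<Longrightarrow> e (real (2*j + 1) / 2^Suc k) = - e (real (2*j) / 2^Suc k)"
  shows "integral {0..<1} (\<lambda>t. norm (S t + T (e t)) powr p)
    \<le> integral {0..<1} (\<lambda>t. norm (S t) powr p) + C * integral {0..<1} (\<lambda>t. norm (e t) powr p)"
proof -
  define F where "F = (\<lambda>t. norm (S t + T (e t)) powr p)"
  define G where "G = (\<lambda>t. norm (S t) powr p)"
  define H where "H = (\<lambda>t. norm (e t) powr p)"
  let ?l = "\<lambda>j. real (2*j) / 2^Suc k" and ?r = "\<lambda>j. real (2*j + 1) / 2^Suc k"
  have S1: "dyadic_step (Suc k) S" using dyadic_step_Suc[OF S] .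
  have F: "dyadic_step (Suc k) F"
    unfolding F_def by (fact dyadic_step_comp2[OF S1 e, where F = "\<lambda>u v. norm (u + T v) powr p"])
  have G: "dyadic_step (Suc k) G"
    unfolding G_def by (fact dyadic_step_comp[OF S1, where F = "\<lambda>u. norm u powr p"])
  have H: "dyadic_step (Suc k) H"
    unfolding H_def by (fact dyadic_step_comp[OF e, where F = "\<lambda>u. norm u powr p"])
  have pair: "F (?l j) + F (?r j) \<le> (G (?l j) + G (?r j)) + C * (H (?l j) + H (?r j))"
    if j: "j < 2^k" for j
  proof -
    have "S (?r j) = S (?l j)" using dyadic_step_odd_child[OF S j] .
    moreover have "T (e (?r j)) = - T (e (?l j))" using antisym[OF j] linear_neg[OF T] by simp
    ultimately show ?thesis
      using smooth[where x = "e (?l j)" and y = "S (?l j)"] antisym[OF j]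
      unfolding F_def G_def H_def by simp
  qed
  have "integral {0..<1} F = (\<Sum>j<2^k. F (?l j) + F (?r j)) / 2^Suc k"
    by (rule integral_dyadic_step_Suc[OF F])
  also have "\<dots> \<le> (\<Sum>j<2^k. (G (?l j) + G (?r j)) + C * (H (?l j) + H (?r j))) / 2^Suc k"
    using pair by (intro divide_right_mono sum_mono) auto
  also have "\<dots> = (\<Sum>j<2^k. G (?l j) + G (?r j)) / 2^Suc k
      + C * ((\<Sum>j<2^k. H (?l j) + H (?r j)) / 2^Suc k)"
    unfolding sum.distrib sum_distrib_left[symmetric] by (simp add: add_divide_distrib distrib_left)
  also have "\<dots> = integral {0..<1} G + C * integral {0..<1} H"
    by (simp only: integral_dyadic_step_Suc[OF G] integral_dyadic_step_Suc[OF H])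
  finally show ?thesis unfolding F_def G_def H_def .
qed

lemma integral_norm_powr_mart_sum_le:
  fixes T :: "'a::banach \<Rightarrow> 'b::real_normed_vector"
  assumes T: "linear T"
    and smooth: "\<And>x y. (norm (y + T x) powr p + norm (y - T x) powr p) / 2
                        \<le> norm y powr p + C * norm x powr p"
    and "dyadic_mart_diffs n d"
  shows "integral {0..<1} (\<lambda>t. norm (y + (\<Sum>k=1..n. T (d k t))) powr p)
    \<le> norm y powr p + C * (\<Sum>k=1..n. integral {0..<1} (\<lambda>t. norm (d k t) powr p))"
  using assms(3)
proof (induction n)
  case 0
  have "((\<lambda>t::real. norm y powr p) has_integral (1 - 0) *\<^sub>R norm y powr p) {0..<1}"
    by (rule has_integral_const_atLeastLessThan) auto
  then show ?case by (simp add: integral_unique)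
next
  case (Suc n)
  have "dyadic_mart_diffs n d" using dyadic_mart_diffs_Suc[OF Suc.prems] .
  have "dyadic_step (Suc n) (d (Suc n))"
    using dyadic_mart_diffs_dyadic_step[OF Suc.prems] by simp
  from integral_norm_powr_mart_step_le[OF T smooth
      dyadic_mart_diffs_partial_sum[OF \<open>dyadic_mart_diffs n d\<close>] this
      dyadic_mart_diffs_antisym[OF Suc.prems]]
  have "integral {0..<1} (\<lambda>t. norm (y + (\<Sum>k=1..Suc n. T (d k t))) powr p)
      \<le> integral {0..<1} (\<lambda>t. norm (y + (\<Sum>k=1..n. T (d k t))) powr p)
        + C * integral {0..<1} (\<lambda>t. norm (d (Suc n) t) powr p)"
    by (simp add: add.assoc)
  with Suc.IH[OF \<open>dyadic_mart_diffs n d\<close>] show ?case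
    by (simp add: algebra_simps)
qed

lemma unif_p_smooth_imp_strong_mart_type:
  fixes T :: "'a::banach \<Rightarrow> 'b::real_normed_vector"
  assumes "linear T" "1 \<le> p" "0 \<le> c" "unif_p_smooth T p c"
  shows "strong_mart_type T p c"
  unfolding strong_mart_type_def
proof (intro allI impI)
  fix n y and d :: "nat \<Rightarrow> real \<Rightarrow> 'a"
  assume "dyadic_mart_diffs n d"
  then have "integral {0..<1} (\<lambda>t. norm (y + (\<Sum>k=1..n. T (d k t))) powr p)
      \<le> norm y powr p + c powr p * (\<Sum>k=1..n. Lp_norm p (d k) powr p)"
    using assms integral_norm_powr_mart_sum_le[of T p "c powr p"]
    by (simp add: Lp_norm_powr unif_p_smooth_iff)
  then show "Lp_norm p (\<lambda>t. y + (\<Sum>k=1..n. T (d k t)))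
      \<le> (norm y powr p + c powr p * (\<Sum>k=1..n. Lp_norm p (d k) powr p)) powr (1 / p)"
    unfolding Lp_norm_def using assms(2) by (intro powr_mono2 integral_nonneg_unconditional) auto
qed

definition rademacher :: "'a::uminus \<Rightarrow> real \<Rightarrow> 'a" where
  "rademacher x t = (if t < 1/2 then x else - x)"

lemma dyadic_step_rademacher: "dyadic_step 1 (rademacher x)"
  unfolding dyadic_step_def dyadic_interval_def rademacher_def by (auto simp: less_2_cases_iff)

lemma integral_rademacher:
  fixes F :: "'a::uminus \<Rightarrow> real"
  shows "integral {0..<1} (\<lambda>t. F (rademacher x t)) = (F x + F (- x)) / 2"
  using integral_dyadic_step_Suc[of 0 "\<lambda>t. F (rademacher x t)"]
    dyadic_step_comp[OF dyadic_step_rademacher, where F = F]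
  by (simp add: rademacher_def)

lemma dyadic_mart_diffs_rademacher:
  fixes x :: "'a::banach"
  shows "dyadic_mart_diffs 1 (\<lambda>_. rademacher x)"
proof -
  have "{..<1/2} \<inter> space (dyadic_filtration 1) = dyadic_interval 1 0"
    unfolding space_dyadic_filtration dyadic_interval_def by auto
  then have "(\<lambda>t. if t \<in> {..<1/2} then x else - x) \<in> borel_measurable (dyadic_filtration 1)"
    using dyadic_interval_in_sets[of 0 1] by (intro measurable_If_set) auto
  then have "rademacher x \<in> borel_measurable (dyadic_filtration 1)"
    by (simp add: rademacher_def[abs_def])
  moreover have "(rademacher x has_integral 0) A" if "A \<in> sets (dyadic_filtration 0)" for A
  proof -
    have "A \<subseteq> dyadic_interval 0 0"
      using sets.sets_into_space[OF that] by (simp add: space_dyadic_filtration dyadic_interval_def)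
    then have "A = {} \<or> A = {0..<1}"
      using dyadic_interval_atom[OF that, of 0] by (auto simp: dyadic_interval_def)
    moreover have "(rademacher x has_integral 0) {0..<1}"
      using has_integral_dyadic_step[OF dyadic_step_rademacher, of x]
      by (simp add: rademacher_def numeral_2_eq_2)
    ultimately show ?thesis by auto
  qed
  ultimately show ?thesis unfolding dyadic_mart_diffs_def by simp
qed

lemma strong_mart_type_imp_unif_p_smooth:
  fixes T :: "'a::banach \<Rightarrow> 'b::real_normed_vector"
  assumes T: "linear T" and p: "1 \<le> p" and c: "0 \<le> c" and "strong_mart_type T p c"
  shows "unif_p_smooth T p c"
  unfolding unif_p_smooth_iff[OF p c]
proof (intro allI)
  fix x :: 'a and y :: 'b
  have "Lp_norm p (\<lambda>t. y + T (rademacher x t))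
      \<le> (norm y powr p + c powr p * Lp_norm p (rademacher x) powr p) powr (1/p)"
    using assms(4) dyadic_mart_diffs_rademacher[of x] unfolding strong_mart_type_def by fastforce
  moreover have "integral {0..<1} (\<lambda>t. norm (y + T (rademacher x t)) powr p)
      = (norm (y + T x) powr p + norm (y - T x) powr p) / 2"
    using integral_rademacher[of "\<lambda>v. norm (y + T v) powr p" x] by (simp add: linear_neg[OF T])
  moreover have "Lp_norm p (rademacher x) powr p = norm x powr p"
    using p integral_rademacher[of "\<lambda>v. norm v powr p" x] by (simp add: Lp_norm_powr)
  ultimately show "(norm (y + T x) powr p + norm (y - T x) powr p) / 2
      \<le> norm y powr p + c powr p * norm x powr p"
    using p by (simp add: Lp_norm_def powr_inverse_le_iff powr_powr)
qed

theorem theorem2: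
  fixes T :: "'a::banach \<Rightarrow> 'b::banach" and p c :: real
  assumes "bounded_linear T" and "1 \<le> p" and "p \<le> 2" and "c > 0"
  shows "unif_p_smooth T p c \<longleftrightarrow> strong_mart_type T p c"
proof -
  have "linear T" using assms(1) by (rule bounded_linear.linear)
  moreover have "0 \<le> c" using assms(4) by simp
  ultimately show ?thesis
    using assms(2) unif_p_smooth_imp_strong_mart_type strong_mart_type_imp_unif_p_smooth by blast
qed

end
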